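(* Let $N\ge2$ and let $f\in C(\mathbb{T}^N)$ be constant on diagonal orbits, i.e. $f(ux_1,\ldots,ux_N)=f(x)$ for all $x\in\mathbb{T}^N$ and $|u|=1$. Then $\|f-f*\sigma_n^{N-1}\|_\infty\to0$ as $n\to\infty$, where $(f*\sigma)(x)=\int_{\mathbb{T}^N}f(y)\sigma(xy^{-1})\,\mathrm{d}m(y)$.
   Context: $\mathbb{T}^N=\{x\in\mathbb{C}^N:|x_j|=1\}$ with normalized Haar measure $\mathrm{d}m=(2\pi)^{-N}\mathrm{d}\theta_1\cdots\mathrm{d}\theta_N$, $x_j=e^{\mathrm{i}\theta_j}$; $xy^{-1}$ is coordinatewise. $(t)_m=\prod_{i=1}^m(t+i-1)$. $\boldsymbol{Z}_{N,k}=\{\alpha\in\mathbb{Z}^N:\sum_i\alpha_i=0,\ \sum_i|\alpha_i|=2k\}$, $S_k(x)=\sum_{\alpha\in\boldsymbol{Z}_{N,k}}x^\alpha$, $\sigma_n^\delta(x)=\sum_{k=0}^n\frac{(-n)_k}{(-n-\delta)_k}S_k(x)$. *)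

theory Defs
  imports "HOL-Analysis.Analysis"
begin

text \<open>The N-torus, with N = CARD('n) given by a finite index type.\<close>
definition torus :: "(complex ^ 'n::finite) set" where
  "torus = {x. \<forall>i. norm (x $ i) = 1}"

definition Zset :: "nat \<Rightarrow> (int ^ 'n::finite) set" where
  "Zset k = {\<alpha>. (\<Sum>i\<in>UNIV. \<alpha> $ i) = 0 \<and> (\<Sum>i\<in>UNIV. \<bar>\<alpha> $ i\<bar>) = 2 * int k}"

definition monom_pow :: "complex ^ 'n::finite \<Rightarrow> int ^ 'n \<Rightarrow> complex" where
  "monom_pow x \<alpha> = (\<Prod>i\<in>UNIV. (x $ i) powi (\<alpha> $ i))"

definition S_poly :: "nat \<Rightarrow> complex ^ 'n::finite \<Rightarrow> complex" where
  "S_poly k x = (\<Sum>\<alpha>\<in>Zset k. monom_pow x \<alpha>)"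

definition sigma_ker :: "nat \<Rightarrow> real \<Rightarrow> complex ^ 'n::finite \<Rightarrow> complex" where
  "sigma_ker n \<delta> x = (\<Sum>k\<le>n. complex_of_real
      (pochhammer (- real n) k / pochhammer (- real n - \<delta>) k) * S_poly k x)"

text \<open>Convolution on the torus w.r.t. normalized Haar measure
  dm = (2 pi)^(-N) d theta_1 ... d theta_N, y_j = e^(i theta_j), theta in [0, 2 pi]^N.\<close>
definition torus_conv ::
  "(complex ^ 'n::finite \<Rightarrow> complex) \<Rightarrow> (complex ^ 'n \<Rightarrow> complex) \<Rightarrow> complex ^ 'n \<Rightarrow> complex" where
  "torus_conv f g x =
     complex_of_real (1 / (2 * pi) ^ CARD('n)) *
     integral (cbox (0::real ^ 'n) (\<chi> i. 2 * pi))
       (\<lambda>\<theta>. f (\<chi> i. cis (\<theta> $ i)) * g (\<chi> i. x $ i / cis (\<theta> $ i)))"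

end

theory Submission
  imports Defs "HOL-Library.Multiset"
begin

text \<open>
  For \<delta> = N - 1 the kernel is a normalised square: if h_n(x) = \<Sum>{x^\<beta> : |\<beta>| = n} is the
  complete homogeneous polynomial, then \<sigma>_n^(N-1) = |h_n|^2 / #{\<beta> : |\<beta>| = n}. Indeed an
  \<alpha> \<in> Z_{N,k} is a difference \<beta> - \<gamma> of exponents of degree n in exactly #{\<delta> : |\<delta>| = n - k}
  ways, and the ratio of these counts is the Pochhammer coefficient of S_k. So the kernel is
  positive with mean one, and orthogonality of the monomials gives its second moment against
  the distance \<Sum>_{i,j} |x_i - x_j|^2 from the diagonal circle in closed form,
  2N(N-1)^2/(n+N-1), which tends to 0. A continuous f that is constant on diagonal orbits satisfies
  |f(y) - f(x)| \<le> \<epsilon> + K_\<epsilon> \<Sum>_{i,j} |x_i/y_i - x_j/y_j|^2; integrating this against the kernel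
  bounds the error uniformly by \<epsilon> + O(1/n).
\<close>

section \<open>Orthogonality of the characters of the torus\<close>

lemma integral_complex_of_real:
  assumes "f integrable_on S"
  shows "integral S (\<lambda>x. complex_of_real (f x)) = complex_of_real (integral S f)"
  using has_integral_of_real[OF integrable_integral[OF assms]] by (rule integral_unique)

lemma integral_cis_int_multiple:
  fixes m :: int
  shows "integral {0..2*pi} (\<lambda>t. cis (of_int m * t)) = (if m = 0 then 2*pi else 0)"
proof (cases "m = 0")
  case True
  then show ?thesis by (simp add: scaleR_conv_of_real)
next
  case False
  let ?F = "\<lambda>t. cis (of_int m * t) / (\<i> * of_int m)"
  have "((\<lambda>t. cis (of_int m * t)) has_integral (?F (2*pi) - ?F 0)) {0..2*pi}"
  proof (rule fundamental_theorem_of_calculus)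
    fix x :: real
    have "((\<lambda>t. cis (of_int m * t)) has_vector_derivative (\<i> * of_int m) * cis (of_int m * x))
            (at x within {0..2*pi})"
      unfolding has_vector_derivative_def
      by (rule has_derivative_eq_rhs[OF has_derivative_cis])
        (auto intro!: derivative_eq_intros simp: fun_eq_iff scaleR_conv_of_real algebra_simps)
    then show "(?F has_vector_derivative cis (of_int m * x)) (at x within {0..2*pi})"
      using False by (auto intro!: derivative_eq_intros simp: field_simps)
  qed auto
  moreover have "cis (of_int m * (2 * pi)) = 1"
    using cis_multiple_2pi[of "of_int m"] by (simp add: mult.commute mult.left_commute)
  ultimately show ?thesis
    using False by (simp add: integral_unique)
qed

lemma lborel_integral_cis_int_multiple:
  fixes m :: int
  defines "g \<equiv> \<lambda>t. indicator {0..2*pi} t *\<^sub>R cis (of_int m * t)"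
  shows "integrable lborel g" and "(\<integral>t. g t \<partial>lborel) = (if m = 0 then 2*pi else 0)"
proof -
  have int: "set_integrable lborel {0..2*pi} (\<lambda>t. cis (of_int m * t))"
    unfolding set_integrable_def
    by (rule borel_integrable_compact) (auto intro!: continuous_intros)
  then show "integrable lborel g"
    by (simp add: set_integrable_def g_def)
  show "(\<integral>t. g t \<partial>lborel) = (if m = 0 then 2*pi else 0)"
    using set_borel_integral_eq_integral[OF int]
    by (simp add: set_lebesgue_integral_def integral_cis_int_multiple g_def)
qed

lemma lborel_integral_prod_Basis:
  fixes f :: "'a::euclidean_space \<Rightarrow> real \<Rightarrow> complex"
  assumes "\<And>b. b \<in> Basis \<Longrightarrow> integrable lborel (f b)"
  shows "integrable lborel (\<lambda>x. \<Prod>b\<in>Basis. f b (x \<bullet> b))"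
    and "(\<integral>x. (\<Prod>b\<in>Basis. f b (x \<bullet> b)) \<partial>lborel) = (\<Prod>b\<in>Basis. \<integral>x. f b x \<partial>lborel)"
proof -
  interpret product_sigma_finite "\<lambda>b. lborel::real measure" by standard
  have [measurable]: "\<And>b. b \<in> Basis \<Longrightarrow> f b \<in> borel_measurable borel"
    using assms[THEN borel_measurable_integrable] by simp
  have "integrable (\<Pi>\<^sub>M b\<in>Basis. lborel) (\<lambda>x. \<Prod>b\<in>Basis. f b (x b))"
    by (rule product_integrable_prod) (auto simp: assms)
  then show "integrable lborel (\<lambda>x. \<Prod>b\<in>Basis. f b (x \<bullet> b))"
    by (subst lborel_eq, subst integrable_distr_eq)
      (auto simp: inner_sum_left_Basis inner_sum_left inner_Basis if_distrib cong: if_cong)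
  have "(\<integral>x. (\<Prod>b\<in>Basis. f b (x \<bullet> b)) \<partial>lborel)
      = (\<integral>x. (\<Prod>b\<in>Basis. f b (x b)) \<partial>(\<Pi>\<^sub>M b\<in>Basis. lborel))"
    by (subst lborel_eq, subst integral_distr)
      (auto simp: inner_sum_left_Basis inner_sum_left inner_Basis if_distrib cong: if_cong)
  also have "\<dots> = (\<Prod>b\<in>Basis. \<integral>x. f b x \<partial>lborel)"
    by (rule product_integral_prod) (auto simp: assms)
  finally show "(\<integral>x. (\<Prod>b\<in>Basis. f b (x \<bullet> b)) \<partial>lborel) = (\<Prod>b\<in>Basis. \<integral>x. f b x \<partial>lborel)" .
qed

abbreviation angle_box :: "(real ^ 'n::finite) set" where
  "angle_box \<equiv> cbox 0 (\<chi> i. 2 * pi)"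

lemma prod_Basis_vec: "(\<Prod>b\<in>Basis. g (b :: real ^ 'n::finite)) = (\<Prod>i\<in>UNIV. g (axis i 1))"
  by (simp add: Basis_vec_def UNION_singleton_eq_range prod.reindex axis_eq_axis inj_on_def)

lemma integral_angle_box_cis_prod:
  fixes \<xi> :: "int ^ 'n::finite"
  shows "integral angle_box (\<lambda>\<theta>. \<Prod>i\<in>UNIV. cis (of_int (\<xi> $ i) * \<theta> $ i))
       = (if \<xi> = 0 then (2*pi) ^ CARD('n) else 0)"
proof -
  define g where "g b t = indicator {0..2*pi} t *\<^sub>R cis (of_int (\<xi> $ axis_index b) * t)"
    for b :: "real ^ 'n" and t :: real
  have g_int: "\<And>b. b \<in> Basis \<Longrightarrow> integrable lborel (g b)"
    unfolding g_def by (rule lborel_integral_cis_int_multiple)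
  have restrict: "(\<lambda>\<theta>. if \<theta> \<in> angle_box then \<Prod>i\<in>UNIV. cis (of_int (\<xi> $ i) * \<theta> $ i) else 0)
      = (\<lambda>\<theta>. \<Prod>b\<in>Basis. g b (\<theta> \<bullet> b))"
  proof
    fix \<theta> :: "real ^ 'n"
    have "(\<Prod>b\<in>Basis. g b (\<theta> \<bullet> b)) = (\<Prod>i\<in>UNIV. g (axis i 1) (\<theta> $ i))"
      by (simp add: prod_Basis_vec cart_eq_inner_axis)
    also have "\<dots> = (if \<theta> \<in> angle_box then \<Prod>i\<in>UNIV. cis (of_int (\<xi> $ i) * \<theta> $ i) else 0)"
    proof (cases "\<theta> \<in> angle_box")
      case True
      then show ?thesis by (auto simp: g_def mem_box_cart intro!: prod.cong)
    next
      case False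
      then obtain i where "\<not> (0 \<le> \<theta> $ i \<and> \<theta> $ i \<le> 2*pi)" by (auto simp: mem_box_cart)
      then have "g (axis i 1) (\<theta> $ i) = 0" by (simp add: g_def)
      then show ?thesis using False by (simp add: prod_zero_iff) metis
    qed
    finally show "(if \<theta> \<in> angle_box then \<Prod>i\<in>UNIV. cis (of_int (\<xi> $ i) * \<theta> $ i) else 0)
        = (\<Prod>b\<in>Basis. g b (\<theta> \<bullet> b))" by simp
  qed
  have "integral angle_box (\<lambda>\<theta>. \<Prod>i\<in>UNIV. cis (of_int (\<xi> $ i) * \<theta> $ i))
      = integral UNIV (\<lambda>\<theta>. \<Prod>b\<in>Basis. g b (\<theta> \<bullet> b))"
    by (simp add: integral_restrict_UNIV flip: restrict)
  also have "\<dots> = (\<integral>\<theta>. (\<Prod>b\<in>Basis. g b (\<theta> \<bullet> b)) \<partial>lborel)"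
    by (rule integral_lborel) (rule lborel_integral_prod_Basis(1)[OF g_int])
  also have "\<dots> = (\<Prod>i\<in>UNIV. \<integral>t. g (axis i 1) t \<partial>lborel)"
    by (subst lborel_integral_prod_Basis(2)[OF g_int]) (simp_all add: prod_Basis_vec)
  also have "\<dots> = (\<Prod>i\<in>UNIV. if \<xi> $ i = 0 then complex_of_real (2*pi) else 0)"
    unfolding g_def by (intro prod.cong refl) (simp add: lborel_integral_cis_int_multiple(2))
  also have "\<dots> = (if \<xi> = 0 then (2*pi) ^ CARD('n) else 0)"
    by (auto simp: prod_zero_iff vec_eq_iff)
  finally show ?thesis .
qed

section \<open>Monomials on the torus\<close>

lemma torus_nth_norm: "w \<in> torus \<Longrightarrow> norm (w $ i) = 1"
  by (simp add: torus_def)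

lemma monom_pow_zero [simp]: "monom_pow w 0 = 1"
  by (simp add: monom_pow_def)

lemma monom_pow_add:
  assumes "\<And>i. w $ i \<noteq> 0"
  shows "monom_pow w (a + b) = monom_pow w a * monom_pow w b"
  unfolding monom_pow_def using assms by (simp add: power_int_add prod.distrib)

lemma inverse_eq_cnj_if_norm_1:
  fixes z :: complex
  assumes "norm z = 1"
  shows "inverse z = cnj z"
  using complex_norm_square[of z] assms by (simp add: inverse_unique)

lemma monom_pow_uminus:
  assumes "w \<in> torus"
  shows "monom_pow w (- a) = cnj (monom_pow w a)"
  unfolding monom_pow_def using assms
  by (simp add: cnj_prod power_int_minus inverse_eq_cnj_if_norm_1 norm_power_int torus_def
           del: complex_cnj_power_int)

lemma monom_pow_diff:
  assumes "w \<in> torus"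
  shows "monom_pow w (a - b) = monom_pow w a * cnj (monom_pow w b)"
proof -
  have "w $ i \<noteq> 0" for i
    using torus_nth_norm[OF assms, of i] by auto
  then show ?thesis
    using monom_pow_add[of w a "- b"] monom_pow_uminus[OF assms, of b] by simp
qed

lemma monom_pow_axis_diff:
  assumes "i \<noteq> j"
  shows "monom_pow w (axis i 1 - axis j 1) = w $ i / w $ j"
proof -
  have "monom_pow w (axis i 1 - axis j 1)
      = (\<Prod>k\<in>UNIV. (if k = i then w $ i else 1) * (if k = j then inverse (w $ j) else 1))"
    unfolding monom_pow_def using assms
    by (intro prod.cong) (auto simp: axis_def power_int_minus)
  then show ?thesis
    by (simp add: prod.distrib prod.delta divide_inverse)
qed

definition torus_div :: "complex ^ 'n::finite \<Rightarrow> real ^ 'n \<Rightarrow> complex ^ 'n" where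
  "torus_div x \<theta> = (\<chi> i. x $ i / cis (\<theta> $ i))"

lemma torus_div_in_torus: "x \<in> torus \<Longrightarrow> torus_div x \<theta> \<in> torus"
  by (simp add: torus_def torus_div_def norm_divide)

lemma monom_pow_torus_div:
  "monom_pow (torus_div x \<theta>) \<xi> = monom_pow x \<xi> * (\<Prod>i\<in>UNIV. cis (of_int ((- \<xi>) $ i) * \<theta> $ i))"
  unfolding monom_pow_def torus_div_def
  by (simp add: prod.distrib divide_inverse power_int_mult_distrib cis_power_int cis_inverse)

lemma continuous_on_monom_pow_torus_div:
  "continuous_on S (\<lambda>\<theta>. monom_pow (torus_div x \<theta>) \<xi>)"
  unfolding monom_pow_torus_div by (intro continuous_intros)

lemma integral_monom_pow_torus_div:
  fixes x :: "complex ^ 'n::finite"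
  shows "integral angle_box (\<lambda>\<theta>. monom_pow (torus_div x \<theta>) \<xi>)
    = (if \<xi> = 0 then (2*pi) ^ CARD('n) else 0)"
  unfolding monom_pow_torus_div integral_mult_right integral_angle_box_cis_prod
  by (simp add: neg_equal_0_iff_equal)

section \<open>Counting exponents\<close>

lemma pochhammer_ratio_eq_binomial_ratio:
  fixes n k d :: nat
  assumes "k \<le> n"
  shows "pochhammer (- real n) k / pochhammer (- real n - real d) k
       = real ((n - k + d) choose (n - k)) / real ((n + d) choose n)"
proof -
  have "pochhammer (- real n) k / pochhammer (- real n - real d) k
      = real (n choose k) / real ((n + d) choose k)"
  proof -
    have poch: "pochhammer (- a) k = (- 1) ^ k * fact k * (a gchoose k)" for a :: real
      by (simp add: gbinomial_pochhammer)
    have "- real n - real d = - real (n + d)"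
      by simp
    then show ?thesis
      by (simp only: poch binomial_gbinomial) simp
  qed
  also have "\<dots> = real ((n - k + d) choose (n - k)) / real ((n + d) choose n)"
    using assms by (simp add: binomial_fact fact_nonzero field_simps)
  finally show ?thesis .
qed

definition weak_compositions :: "nat \<Rightarrow> (int ^ 'n::finite) set" where
  "weak_compositions m = {\<beta>. (\<forall>i. 0 \<le> \<beta> $ i) \<and> (\<Sum>i\<in>UNIV. \<beta> $ i) = int m}"

lemma size_eq_sum_count: "size (M :: 'a::finite multiset) = (\<Sum>i\<in>UNIV. count M i)"
  unfolding size_multiset_overloaded_eq by (rule sum.mono_neutral_left) (auto simp: not_in_iff)

lemma bij_betw_multisets_weak_compositions:
  "bij_betw (\<lambda>M. \<chi> i. int (count M i)) (multisets_of_size UNIV m)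
     (weak_compositions m :: (int ^ 'n::finite) set)"
proof (rule bij_betw_byWitness[where f' = "\<lambda>\<beta>. Abs_multiset (\<lambda>i. nat (\<beta> $ i))"])
  show "\<forall>M\<in>multisets_of_size UNIV m. Abs_multiset (\<lambda>i. nat ((\<chi> i. int (count M i)) $ i)) = M"
    by (simp add: count_inverse)
  show "\<forall>\<beta>\<in>weak_compositions m. (\<chi> i. int (count (Abs_multiset (\<lambda>i. nat (\<beta> $ i))) i)) = \<beta>"
    by (auto simp: weak_compositions_def vec_eq_iff)
  show "(\<lambda>M. \<chi> i. int (count M i)) ` multisets_of_size UNIV m \<subseteq> weak_compositions m"
    by (auto simp: multisets_of_size_def weak_compositions_def size_eq_sum_count)
  show "(\<lambda>\<beta>. Abs_multiset (\<lambda>i. nat (\<beta> $ i))) ` weak_compositions m \<subseteq> multisets_of_size UNIV m"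
  proof (rule image_subsetI)
    fix \<beta>
    assume "\<beta> \<in> weak_compositions m"
    then have "int (\<Sum>i\<in>UNIV. nat (\<beta> $ i)) = int m"
      by (simp add: weak_compositions_def of_nat_sum)
    then have "(\<Sum>i\<in>UNIV. nat (\<beta> $ i)) = m"
      by (simp only: of_nat_eq_iff)
    then show "Abs_multiset (\<lambda>i. nat (\<beta> $ i)) \<in> multisets_of_size UNIV m"
      by (simp add: multisets_of_size_def size_eq_sum_count)
  qed
qed

lemma finite_weak_compositions [simp]: "finite (weak_compositions m :: (int ^ 'n::finite) set)"
  using bij_betw_finite[OF bij_betw_multisets_weak_compositions[where 'n='n]]
    finite_multisets_of_size[of "UNIV :: 'n set"] by simp

lemma card_weak_compositions:
  "card (weak_compositions m :: (int ^ 'n::finite) set) = (CARD('n) + m - 1) choose m"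
  using bij_betw_same_card[OF bij_betw_multisets_weak_compositions[where 'n='n]]
    card_multisets_of_size[of "UNIV :: 'n set"] by simp

lemma card_weak_compositions_pos: "card (weak_compositions m :: (int ^ 'n::finite) set) > 0"
proof -
  have "CARD('n) > 0"
    by simp
  then have "m \<le> CARD('n) + m - 1"
    by linarith
  then show ?thesis
    by (simp add: card_weak_compositions)
qed

definition pos_part :: "int ^ 'n::finite \<Rightarrow> int ^ 'n" where
  "pos_part \<alpha> = (\<chi> i. max (\<alpha> $ i) 0)"

definition neg_part :: "int ^ 'n::finite \<Rightarrow> int ^ 'n" where
  "neg_part \<alpha> = pos_part (- \<alpha>)"

definition vec_min :: "int ^ 'n::finite \<Rightarrow> int ^ 'n \<Rightarrow> int ^ 'n" where
  "vec_min \<beta> \<gamma> = (\<chi> i. min (\<beta> $ i) (\<gamma> $ i))"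

lemma pos_part_diff_neg_part [simp]: "pos_part \<alpha> - neg_part \<alpha> = \<alpha>"
  by (auto simp: pos_part_def neg_part_def vec_eq_iff max_def)

lemma pos_neg_part_in_weak_compositions:
  assumes "\<alpha> \<in> Zset k"
  shows "pos_part \<alpha> \<in> weak_compositions k" and "neg_part \<alpha> \<in> weak_compositions k"
proof -
  have "(\<Sum>i\<in>UNIV. pos_part \<alpha> $ i) - (\<Sum>i\<in>UNIV. neg_part \<alpha> $ i) = (\<Sum>i\<in>UNIV. \<alpha> $ i)"
    unfolding sum_subtractf[symmetric] vector_minus_component[symmetric] by simp
  moreover have "(\<Sum>i\<in>UNIV. pos_part \<alpha> $ i) + (\<Sum>i\<in>UNIV. neg_part \<alpha> $ i) = (\<Sum>i\<in>UNIV. \<bar>\<alpha> $ i\<bar>)"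
    unfolding sum.distrib[symmetric]
    by (intro sum.cong) (auto simp: pos_part_def neg_part_def)
  ultimately show "pos_part \<alpha> \<in> weak_compositions k" "neg_part \<alpha> \<in> weak_compositions k"
    using assms by (auto simp: Zset_def weak_compositions_def pos_part_def neg_part_def)
qed

lemma finite_Zset [simp]: "finite (Zset k :: (int ^ 'n::finite) set)"
proof -
  have "Zset k \<subseteq> (\<lambda>(\<beta>, \<gamma>). \<beta> - \<gamma>) ` (weak_compositions k \<times> (weak_compositions k :: (int ^ 'n) set))"
  proof
    fix \<alpha>
    assume "\<alpha> \<in> Zset k"
    then show "\<alpha> \<in> (\<lambda>(\<beta>, \<gamma>). \<beta> - \<gamma>) ` (weak_compositions k \<times> weak_compositions k)"
      using pos_neg_part_in_weak_compositions
      by (intro image_eqI[where x = "(pos_part \<alpha>, neg_part \<alpha>)"]) auto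
  qed
  then show ?thesis
    by (rule finite_subset) simp
qed

lemma weak_compositions_diff_decomposition:
  assumes \<beta>: "\<beta> \<in> weak_compositions n" and \<gamma>: "\<gamma> \<in> weak_compositions n"
  defines "k \<equiv> n - nat (\<Sum>i\<in>UNIV. vec_min \<beta> \<gamma> $ i)"
  shows "k \<le> n" and "\<beta> - \<gamma> \<in> Zset k" and "vec_min \<beta> \<gamma> \<in> weak_compositions (n - k)"
proof -
  define s where "s = (\<Sum>i\<in>UNIV. vec_min \<beta> \<gamma> $ i)"
  have "0 \<le> s"
    unfolding s_def using \<beta> \<gamma> by (intro sum_nonneg) (auto simp: vec_min_def weak_compositions_def)
  moreover have "s \<le> int n"
    using \<beta> sum_mono[of UNIV "\<lambda>i. vec_min \<beta> \<gamma> $ i" "\<lambda>i. \<beta> $ i"]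
    by (auto simp: s_def vec_min_def weak_compositions_def)
  moreover have "(\<Sum>i\<in>UNIV. \<bar>(\<beta> - \<gamma>) $ i\<bar>) = (\<Sum>i\<in>UNIV. \<beta> $ i + \<gamma> $ i - 2 * vec_min \<beta> \<gamma> $ i)"
    by (intro sum.cong) (auto simp: vec_min_def)
  ultimately show "k \<le> n" "\<beta> - \<gamma> \<in> Zset k" "vec_min \<beta> \<gamma> \<in> weak_compositions (n - k)"
    using \<beta> \<gamma>
    by (auto simp: k_def Zset_def weak_compositions_def s_def vec_min_def sum_subtractf sum.distrib
        sum_distrib_left of_nat_diff)
qed

lemma bij_betw_weak_composition_pairs:
  "bij_betw (\<lambda>(k, \<alpha>, \<delta>). (pos_part \<alpha> + \<delta>, neg_part \<alpha> + \<delta>))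
     (SIGMA k:{..n}. Zset k \<times> weak_compositions (n - k))
     (weak_compositions n \<times> (weak_compositions n :: (int ^ 'n::finite) set))"
proof (rule bij_betw_byWitness[where
      f' = "\<lambda>(\<beta>, \<gamma>). (n - nat (\<Sum>i\<in>UNIV. vec_min \<beta> \<gamma> $ i), \<beta> - \<gamma>, vec_min \<beta> \<gamma>)"])
  have vec_min_pos_neg: "vec_min (pos_part \<alpha> + \<delta>) (neg_part \<alpha> + \<delta>) = \<delta>" for \<alpha> \<delta>
    by (auto simp: vec_min_def pos_part_def neg_part_def vec_eq_iff)
  have diff_pos_neg: "(pos_part \<alpha> + \<delta>) - (neg_part \<alpha> + \<delta>) = \<alpha>" for \<alpha> \<delta>
    using pos_part_diff_neg_part[of \<alpha>] by (simp add: algebra_simps)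
  show "\<forall>x\<in>SIGMA k:{..n}. Zset k \<times> weak_compositions (n - k).
      (\<lambda>(\<beta>, \<gamma>). (n - nat (\<Sum>i\<in>UNIV. vec_min \<beta> \<gamma> $ i), \<beta> - \<gamma>, vec_min \<beta> \<gamma>))
        ((\<lambda>(k, \<alpha>, \<delta>). (pos_part \<alpha> + \<delta>, neg_part \<alpha> + \<delta>)) x) = x"
    by (auto simp: vec_min_pos_neg diff_pos_neg weak_compositions_def)
  show "\<forall>y\<in>weak_compositions n \<times> weak_compositions n.
      (\<lambda>(k, \<alpha>, \<delta>). (pos_part \<alpha> + \<delta>, neg_part \<alpha> + \<delta>))
        ((\<lambda>(\<beta>, \<gamma>). (n - nat (\<Sum>i\<in>UNIV. vec_min \<beta> \<gamma> $ i), \<beta> - \<gamma>, vec_min \<beta> \<gamma>)) y) = y"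
    by (auto simp: pos_part_def neg_part_def vec_min_def vec_eq_iff)
  show "(\<lambda>(k, \<alpha>, \<delta>). (pos_part \<alpha> + \<delta>, neg_part \<alpha> + \<delta>)) ` (SIGMA k:{..n}. Zset k \<times> weak_compositions (n - k))
      \<subseteq> weak_compositions n \<times> weak_compositions n"
  proof (rule image_subsetI, goal_cases)
    case (1 x)
    then obtain k \<alpha> \<delta> where x: "x = (k, \<alpha>, \<delta>)" and "k \<le> n" "\<alpha> \<in> Zset k"
      and "\<delta> \<in> weak_compositions (n - k)"
      by auto
    then show "(\<lambda>(k, \<alpha>, \<delta>). (pos_part \<alpha> + \<delta>, neg_part \<alpha> + \<delta>)) x
        \<in> weak_compositions n \<times> weak_compositions n"
      using pos_neg_part_in_weak_compositions[of \<alpha> k]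
      by (auto simp: weak_compositions_def sum.distrib)
  qed
  show "(\<lambda>(\<beta>, \<gamma>). (n - nat (\<Sum>i\<in>UNIV. vec_min \<beta> \<gamma> $ i), \<beta> - \<gamma>, vec_min \<beta> \<gamma>))
      ` (weak_compositions n \<times> weak_compositions n) \<subseteq> (SIGMA k:{..n}. Zset k \<times> weak_compositions (n - k))"
    using weak_compositions_diff_decomposition by fastforce
qed

lemma sum_diff_weak_compositions:
  fixes g :: "int ^ 'n::finite \<Rightarrow> 'a::comm_ring_1"
  shows "(\<Sum>\<beta>\<in>weak_compositions n. \<Sum>\<gamma>\<in>weak_compositions n. g (\<beta> - \<gamma>))
       = (\<Sum>k\<le>n. of_nat (card (weak_compositions (n - k) :: (int ^ 'n) set)) * (\<Sum>\<alpha>\<in>Zset k. g \<alpha>))"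
proof -
  have "(\<Sum>\<beta>\<in>weak_compositions n. \<Sum>\<gamma>\<in>weak_compositions n. g (\<beta> - \<gamma>))
      = (\<Sum>(\<beta>, \<gamma>)\<in>weak_compositions n \<times> weak_compositions n. g (\<beta> - \<gamma>))"
    by (simp add: sum.cartesian_product)
  also have "\<dots> = (\<Sum>(k, \<alpha>, \<delta>)\<in>(SIGMA k:{..n}. Zset k \<times> weak_compositions (n - k)).
      g ((pos_part \<alpha> + \<delta>) - (neg_part \<alpha> + \<delta>)))"
    by (subst sum.reindex_bij_betw[OF bij_betw_weak_composition_pairs, symmetric])
      (simp add: case_prod_unfold)
  also have "\<dots> = (\<Sum>k\<le>n. \<Sum>(\<alpha>, \<delta>)\<in>Zset k \<times> (weak_compositions (n - k) :: (int ^ 'n) set). g \<alpha>)"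
    by (subst sum.Sigma[symmetric]) (auto simp: case_prod_unfold algebra_simps)
  also have "\<dots> = (\<Sum>k\<le>n. of_nat (card (weak_compositions (n - k) :: (int ^ 'n) set)) * (\<Sum>\<alpha>\<in>Zset k. g \<alpha>))"
    by (simp add: sum.cartesian_product[symmetric] sum_distrib_left)
  finally show ?thesis .
qed

section \<open>The kernel as a normalised square\<close>

definition complete_hom :: "nat \<Rightarrow> complex ^ 'n::finite \<Rightarrow> complex" where
  "complete_hom n w = (\<Sum>\<beta>\<in>weak_compositions n. monom_pow w \<beta>)"

definition sq_kernel :: "nat \<Rightarrow> complex ^ 'n::finite \<Rightarrow> real" where
  "sq_kernel n w = (cmod (complete_hom n w))\<^sup>2 / real (card (weak_compositions n :: (int ^ 'n) set))"

lemma sq_kernel_eq_sum: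
  fixes w :: "complex ^ 'n::finite"
  assumes "w \<in> torus"
  shows "complex_of_real (sq_kernel n w)
    = (\<Sum>\<beta>\<in>weak_compositions n. \<Sum>\<gamma>\<in>weak_compositions n. monom_pow w (\<beta> - \<gamma>))
      / of_nat (card (weak_compositions n :: (int ^ 'n) set))"
proof -
  have "(\<Sum>\<beta>\<in>weak_compositions n. \<Sum>\<gamma>\<in>weak_compositions n. monom_pow w (\<beta> - \<gamma>))
      = complete_hom n w * cnj (complete_hom n w)"
    unfolding complete_hom_def cnj_sum sum_product monom_pow_diff[OF assms] ..
  then show ?thesis
    using complex_norm_square[of "complete_hom n w"] by (simp add: sq_kernel_def)
qed

lemma sigma_ker_eq_sq_kernel:
  fixes w :: "complex ^ 'n::finite"
  assumes "w \<in> torus"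
  shows "sigma_ker n (real CARD('n) - 1) w = complex_of_real (sq_kernel n w)"
proof -
  define d where "d = CARD('n) - 1"
  have "real CARD('n) - 1 = real d"
    using zero_less_card_finite[where 'a='n] by (simp add: d_def of_nat_diff)
  then have coeff: "pochhammer (- real n) k / pochhammer (- real n - (real CARD('n) - 1)) k
      = real (card (weak_compositions (n - k) :: (int ^ 'n) set))
        / real (card (weak_compositions n :: (int ^ 'n) set))" if "k \<le> n" for k
    using that pochhammer_ratio_eq_binomial_ratio[of k n d]
    by (simp add: card_weak_compositions d_def add.commute)
  have "sigma_ker n (real CARD('n) - 1) w
      = (\<Sum>k\<le>n. of_nat (card (weak_compositions (n - k) :: (int ^ 'n) set)) * S_poly k w)
        / of_nat (card (weak_compositions n :: (int ^ 'n) set))"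
    unfolding sigma_ker_def sum_divide_distrib by (intro sum.cong refl) (simp add: coeff)
  also have "\<dots> = complex_of_real (sq_kernel n w)"
    unfolding S_poly_def sum_diff_weak_compositions[symmetric] sq_kernel_eq_sum[OF assms] ..
  finally show ?thesis .
qed

lemma sq_kernel_nonneg: "sq_kernel n w \<ge> 0"
  by (simp add: sq_kernel_def)

lemma continuous_on_sq_kernel_torus_div:
  fixes x :: "complex ^ 'n::finite"
  shows "continuous_on S (\<lambda>\<theta>. sq_kernel n (torus_div x \<theta>))"
  unfolding sq_kernel_def complete_hom_def using card_weak_compositions_pos[where 'n='n, of n]
  by (intro continuous_intros continuous_on_monom_pow_torus_div) auto

lemma integral_sq_kernel_monom_pow:
  fixes x :: "complex ^ 'n::finite"
  assumes "x \<in> torus"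
  shows "integral angle_box
      (\<lambda>\<theta>. complex_of_real (sq_kernel n (torus_div x \<theta>)) * monom_pow (torus_div x \<theta>) d)
    = complex_of_real (real (card {\<beta>\<in>weak_compositions n. \<beta> + d \<in> weak_compositions n})
        / real (card (weak_compositions n :: (int ^ 'n) set)) * (2*pi) ^ CARD('n))"
proof -
  let ?W = "weak_compositions n :: (int ^ 'n) set"
  let ?m = "\<lambda>\<xi> \<theta>. monom_pow (torus_div x \<theta>) \<xi>"
  have "complex_of_real (sq_kernel n (torus_div x \<theta>)) * ?m d \<theta>
      = (\<Sum>\<beta>\<in>?W. \<Sum>\<gamma>\<in>?W. ?m (\<beta> - \<gamma> + d) \<theta>) / of_nat (card ?W)" for \<theta>
  proof -
    have "w $ i \<noteq> 0" if "w \<in> torus" for w :: "complex ^ 'n" and i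
      using torus_nth_norm[OF that, of i] by auto
    then show ?thesis
      unfolding sq_kernel_eq_sum[OF torus_div_in_torus[OF assms]]
      by (simp add: sum_distrib_right monom_pow_add torus_div_in_torus[OF assms])
  qed
  then have "integral angle_box (\<lambda>\<theta>. complex_of_real (sq_kernel n (torus_div x \<theta>)) * ?m d \<theta>)
      = (\<Sum>\<beta>\<in>?W. \<Sum>\<gamma>\<in>?W. integral angle_box (?m (\<beta> - \<gamma> + d))) / of_nat (card ?W)"
    by (simp add: integral_sum integrable_sum integrable_continuous continuous_on_monom_pow_torus_div)
  also have "\<dots> = (\<Sum>\<beta>\<in>?W. \<Sum>\<gamma>\<in>?W. if \<gamma> = \<beta> + d then complex_of_real ((2*pi) ^ CARD('n)) else 0)
      / of_nat (card ?W)"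
  proof -
    have shift: "b - c + d = 0 \<longleftrightarrow> c = b + d" for b c :: "int ^ 'n"
      by (auto simp: algebra_simps)
    show ?thesis
      by (simp only: integral_monom_pow_torus_div shift if_distrib[of complex_of_real] of_real_0)
  qed
  also have "\<dots> = complex_of_real (real (card {\<beta>\<in>?W. \<beta> + d \<in> ?W}) / real (card ?W) * (2*pi) ^ CARD('n))"
    by (simp add: sum.inter_filter[symmetric])
  finally show ?thesis .
qed

lemma integral_sq_kernel:
  fixes x :: "complex ^ 'n::finite"
  assumes "x \<in> torus"
  shows "integral angle_box (\<lambda>\<theta>. sq_kernel n (torus_div x \<theta>)) = (2*pi) ^ CARD('n)"
proof -
  have "complex_of_real (integral angle_box (\<lambda>\<theta>. sq_kernel n (torus_div x \<theta>)))
      = complex_of_real ((2*pi) ^ CARD('n))"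
    using integral_sq_kernel_monom_pow[OF assms, of n 0] card_weak_compositions_pos[of n]
    by (simp add: card_gt_0_iff integral_complex_of_real integrable_continuous continuous_on_sq_kernel_torus_div)
  then show ?thesis
    by (simp only: of_real_eq_iff)
qed

section \<open>Second moment of the kernel\<close>

definition diagonal_spread :: "complex ^ 'n::finite \<Rightarrow> real" where
  "diagonal_spread w = (\<Sum>i\<in>UNIV. \<Sum>j\<in>UNIV. (cmod (w $ i - w $ j))\<^sup>2)"

lemma diagonal_spread_nonneg: "diagonal_spread w \<ge> 0"
  unfolding diagonal_spread_def by (intro sum_nonneg) auto

lemma continuous_on_diagonal_spread_torus_div:
  "continuous_on S (\<lambda>\<theta>. diagonal_spread (torus_div x \<theta>))"
  unfolding diagonal_spread_def torus_div_def by (intro continuous_intros) auto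

lemma diagonal_spread_eq_monom_pow_sum:
  assumes "w \<in> torus"
  shows "complex_of_real (diagonal_spread w) = (\<Sum>i\<in>UNIV. \<Sum>j\<in>UNIV - {i}.
      2 - monom_pow w (axis i 1 - axis j 1) - monom_pow w (axis j 1 - axis i 1))"
proof -
  have summand: "(complex_of_real (cmod (w $ i - w $ j)))\<^sup>2
      = 2 - monom_pow w (axis i 1 - axis j 1) - monom_pow w (axis j 1 - axis i 1)" if "j \<noteq> i" for i j
  proof -
    have norm: "norm (w $ i) = 1" "norm (w $ j) = 1"
      using assms by (auto simp: torus_def)
    then have nonzero: "w $ i \<noteq> 0" "w $ j \<noteq> 0"
      by auto
    have "(complex_of_real (cmod (w $ i - w $ j)))\<^sup>2 = (w $ i - w $ j) * cnj (w $ i - w $ j)"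
      using complex_norm_square[of "w $ i - w $ j"] by simp
    also have "\<dots> = 2 - w $ i / w $ j - w $ j / w $ i"
      using norm nonzero by (simp add: inverse_eq_cnj_if_norm_1[symmetric] field_simps)
    finally show ?thesis
      using that by (simp add: monom_pow_axis_diff)
  qed
  have "(\<Sum>j\<in>UNIV. complex_of_real ((cmod (w $ i - w $ j))\<^sup>2))
      = (\<Sum>j\<in>UNIV - {i}. complex_of_real ((cmod (w $ i - w $ j))\<^sup>2))" for i
    by (rule sum.mono_neutral_right) auto
  then show ?thesis
    unfolding diagonal_spread_def of_real_sum by (auto intro!: sum.cong simp: summand)
qed

lemma card_shift_weak_compositions:
  fixes i j :: "'n::finite"
  assumes "i \<noteq> j" and "n \<ge> 1"
  shows "card {\<beta>\<in>weak_compositions n. \<beta> + (axis i 1 - axis j 1) \<in> weak_compositions n}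
       = card (weak_compositions (n - 1) :: (int ^ 'n) set)"
proof -
  have "bij_betw (\<lambda>\<beta>. \<beta> - axis j 1)
      {\<beta>\<in>weak_compositions n. \<beta> + (axis i 1 - axis j 1) \<in> weak_compositions n}
      (weak_compositions (n - 1) :: (int ^ 'n) set)"
    using assms
    by (intro bij_betw_byWitness[where f' = "\<lambda>\<gamma>. \<gamma> + axis j 1"])
      (auto simp: weak_compositions_def axis_def sum.distrib sum_subtractf of_nat_diff
        split: if_splits)
  then show ?thesis
    by (rule bij_betw_same_card)
qed

lemma card_weak_compositions_ratio:
  assumes "n \<ge> 1"
  shows "real (card (weak_compositions (n - 1) :: (int ^ 'n::finite) set))
      / real (card (weak_compositions n :: (int ^ 'n) set)) = real n / (real n + real CARD('n) - 1)"
proof -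
  have "CARD('n) \<ge> 1"
    using zero_less_card_finite[where 'a='n] by linarith
  then have "pochhammer (- real n) 1 / pochhammer (- real n - real (CARD('n) - 1)) 1
      = - real n / - (real n + real CARD('n) - 1)"
    by (simp add: of_nat_diff algebra_simps)
  also have "\<dots> = real n / (real n + real CARD('n) - 1)"
    by (rule minus_divide_divide)
  finally show ?thesis
    using pochhammer_ratio_eq_binomial_ratio[of 1 n "CARD('n) - 1"] assms
    by (simp add: card_weak_compositions add.commute)
qed

lemma integral_sq_kernel_pair_term:
  fixes x :: "complex ^ 'n::finite"
  assumes x: "x \<in> torus" and n: "n \<ge> 1" and "i \<noteq> j"
  defines "K \<equiv> \<lambda>\<theta>. complex_of_real (sq_kernel n (torus_div x \<theta>))"
    and "m \<equiv> \<lambda>\<xi> \<theta>. monom_pow (torus_div x \<theta>) \<xi>"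
  shows "integral angle_box (\<lambda>\<theta>. K \<theta> * (2 - m (axis i 1 - axis j 1) \<theta> - m (axis j 1 - axis i 1) \<theta>))
    = complex_of_real (2 * (real CARD('n) - 1) / (real n + real CARD('n) - 1) * (2*pi) ^ CARD('n))"
proof -
  define N where "N = real CARD('n)"
  define V where "V = (2*pi) ^ CARD('n)"
  have cont_K: "continuous_on angle_box K"
    unfolding K_def by (intro continuous_intros continuous_on_sq_kernel_torus_div)
  have "(\<lambda>\<theta>. K \<theta> * 2) integrable_on angle_box"
    by (intro integrable_continuous continuous_intros cont_K)
  moreover have "(\<lambda>\<theta>. K \<theta> * m \<xi> \<theta>) integrable_on angle_box" for \<xi>
    unfolding m_def by (intro integrable_continuous continuous_intros cont_K continuous_on_monom_pow_torus_div)
  ultimately have "integral angle_box (\<lambda>\<theta>. K \<theta> * (2 - m (axis i 1 - axis j 1) \<theta> - m (axis j 1 - axis i 1) \<theta>))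
      = integral angle_box K * 2 - integral angle_box (\<lambda>\<theta>. K \<theta> * m (axis i 1 - axis j 1) \<theta>)
        - integral angle_box (\<lambda>\<theta>. K \<theta> * m (axis j 1 - axis i 1) \<theta>)"
    by (simp add: right_diff_distrib integral_diff integrable_diff integral_mult_left)
  also have "\<dots> = complex_of_real (2 * V - real n / (real n + N - 1) * V - real n / (real n + N - 1) * V)"
  proof -
    have "integral angle_box K = complex_of_real V"
      using integral_sq_kernel[OF x, of n]
      by (simp add: K_def V_def integral_complex_of_real integrable_continuous continuous_on_sq_kernel_torus_div)
    moreover have "integral angle_box (\<lambda>\<theta>. K \<theta> * m (axis k 1 - axis l 1) \<theta>)
        = complex_of_real (real n / (real n + N - 1) * V)" if "k \<noteq> l" for k l
      unfolding K_def m_def integral_sq_kernel_monom_pow[OF x] card_shift_weak_compositions[OF that n]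
        card_weak_compositions_ratio[OF n] N_def V_def ..
    ultimately show ?thesis
      using \<open>i \<noteq> j\<close> by simp
  qed
  also have "2 * V - real n / (real n + N - 1) * V - real n / (real n + N - 1) * V
      = 2 * (N - 1) / (real n + N - 1) * V"
  proof -
    have "N \<ge> 1"
      using zero_less_card_finite[where 'a='n] by (simp add: N_def)
    then have "real n + N - 1 \<noteq> 0"
      using n by simp
    then show ?thesis
      by (simp add: divide_simps) (simp add: algebra_simps)
  qed
  finally show ?thesis
    by (simp add: N_def V_def)
qed

lemma integral_sq_kernel_diagonal_spread:
  fixes x :: "complex ^ 'n::finite"
  assumes x: "x \<in> torus" and n: "n \<ge> 1"
  shows "integral angle_box (\<lambda>\<theta>. sq_kernel n (torus_div x \<theta>) * diagonal_spread (torus_div x \<theta>))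
    = 2 * real CARD('n) * (real CARD('n) - 1)\<^sup>2 / (real n + real CARD('n) - 1) * (2*pi) ^ CARD('n)"
proof -
  let ?K = "\<lambda>\<theta>. complex_of_real (sq_kernel n (torus_div x \<theta>))"
  let ?m = "\<lambda>\<xi> \<theta>. monom_pow (torus_div x \<theta>) \<xi>"
  let ?c = "2 * (real CARD('n) - 1) / (real n + real CARD('n) - 1) * (2*pi) ^ CARD('n)"
  have "complex_of_real (integral angle_box
      (\<lambda>\<theta>. sq_kernel n (torus_div x \<theta>) * diagonal_spread (torus_div x \<theta>)))
      = integral angle_box (\<lambda>\<theta>. \<Sum>i\<in>UNIV. \<Sum>j\<in>UNIV - {i}.
          ?K \<theta> * (2 - ?m (axis i 1 - axis j 1) \<theta> - ?m (axis j 1 - axis i 1) \<theta>))"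
    by (simp add: integral_complex_of_real[symmetric] integrable_continuous continuous_intros
        continuous_on_sq_kernel_torus_div continuous_on_diagonal_spread_torus_div
        diagonal_spread_eq_monom_pow_sum torus_div_in_torus[OF x] sum_distrib_left)
  also have "\<dots> = (\<Sum>i\<in>UNIV. \<Sum>j\<in>UNIV - {i}. integral angle_box
      (\<lambda>\<theta>. ?K \<theta> * (2 - ?m (axis i 1 - axis j 1) \<theta> - ?m (axis j 1 - axis i 1) \<theta>)))"
    by (simp add: integral_sum integrable_sum integrable_continuous continuous_intros
        continuous_on_sq_kernel_torus_div continuous_on_monom_pow_torus_div)
  also have "\<dots> = complex_of_real (real CARD('n) * (real CARD('n) - 1) * ?c)"
    by (simp add: integral_sq_kernel_pair_term[OF x n] of_nat_diff)
  finally show ?thesis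
    by (simp only: of_real_eq_iff) (simp add: power2_eq_square)
qed

section \<open>Uniform approximation\<close>

lemma norm_le_sum_norm_vec: "norm x \<le> (\<Sum>i\<in>UNIV. norm (x $ i))"
  by (simp add: norm_vec_def L2_set_le_sum)

lemma compact_torus: "compact (torus :: (complex ^ 'n::finite) set)"
proof -
  have "closed (torus :: (complex ^ 'n) set)"
    unfolding torus_def by (intro closed_Collect_all closed_Collect_eq continuous_intros)
  moreover have "norm x \<le> real CARD('n)" if "x \<in> torus" for x :: "complex ^ 'n"
    using norm_le_sum_norm_vec[of x] that by (simp add: torus_def)
  then have "bounded (torus :: (complex ^ 'n) set)"
    unfolding bounded_iff by blast
  ultimately show ?thesis
    by (simp add: compact_eq_bounded_closed)
qed

lemma rotation_close_if_diagonal_spread: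
  fixes x y :: "complex ^ 'n::finite"
  assumes "x \<in> torus" and "y \<in> torus"
  obtains u where "norm u = 1"
    and "dist (\<chi> i. u * y $ i) x \<le> real CARD('n) * sqrt (diagonal_spread (\<chi> i. x $ i / y $ i))"
proof -
  define w where "w = (\<chi> i. x $ i / y $ i)"
  obtain i0 :: 'n where True by blast
  define u where "u = w $ i0"
  have "norm u = 1"
    using assms by (simp add: u_def w_def torus_def norm_divide)
  moreover have "norm (x $ i - u * y $ i) \<le> sqrt (diagonal_spread w)" for i
  proof -
    have norm: "norm (y $ i) = 1"
      using assms by (simp add: torus_def)
    then have "x $ i - u * y $ i = y $ i * (w $ i - w $ i0)"
      by (auto simp: w_def u_def field_simps)
    then have "norm (x $ i - u * y $ i) = cmod (w $ i - w $ i0)"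
      using norm by (simp add: norm_mult)
    also have "\<dots> = sqrt ((cmod (w $ i - w $ i0))\<^sup>2)"
      by simp
    also have "\<dots> \<le> sqrt (diagonal_spread w)"
      unfolding diagonal_spread_def
      by (intro real_sqrt_le_mono order.trans[OF member_le_sum member_le_sum[of i]])
        (auto intro: sum_nonneg)
    finally show ?thesis .
  qed
  then have "(\<Sum>i\<in>UNIV. norm (x $ i - u * y $ i)) \<le> (\<Sum>i\<in>(UNIV::'n set). sqrt (diagonal_spread w))"
    by (intro sum_mono)
  then have "dist (\<chi> i. u * y $ i) x \<le> real CARD('n) * sqrt (diagonal_spread w)"
    using norm_le_sum_norm_vec[of "x - (\<chi> i. u * y $ i)"] by (simp add: dist_norm norm_minus_commute)
  ultimately show ?thesis
    using that by (simp add: w_def)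
qed

lemma norm_diff_less_if_diagonal_spread_less:
  fixes f :: "complex ^ 'n::finite \<Rightarrow> complex"
  assumes inv: "\<forall>x\<in>torus. \<forall>u::complex. norm u = 1 \<longrightarrow> f (\<chi> i. u * x $ i) = f x"
    and "\<delta> > 0"
    and \<delta>: "\<And>x y. x \<in> torus \<Longrightarrow> y \<in> torus \<Longrightarrow> dist y x < \<delta> \<Longrightarrow> dist (f y) (f x) < e"
    and x: "x \<in> torus" and y: "y \<in> torus"
    and small: "diagonal_spread (\<chi> i. x $ i / y $ i) < (\<delta> / real CARD('n))\<^sup>2"
  shows "norm (f y - f x) < e"
proof -
  obtain u where u: "norm u = 1"
    and close: "dist (\<chi> i. u * y $ i) x \<le> real CARD('n) * sqrt (diagonal_spread (\<chi> i. x $ i / y $ i))"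
    using rotation_close_if_diagonal_spread[OF x y] .
  have "sqrt (diagonal_spread (\<chi> i. x $ i / y $ i)) < \<delta> / real CARD('n)"
    using \<open>\<delta> > 0\<close> real_sqrt_less_mono[OF small] by simp
  with close have "dist (\<chi> i. u * y $ i) x < \<delta>"
    by (simp add: field_simps)
  moreover have "(\<chi> i. u * y $ i) \<in> torus"
    using y u by (simp add: torus_def norm_mult)
  ultimately have "dist (f (\<chi> i. u * y $ i)) (f x) < e"
    using \<delta>[OF x] by blast
  then show ?thesis
    using inv y u by (simp add: dist_norm)
qed

text \<open>Near the diagonal, invariance lets us rotate y onto x; far from it, 2 sup |f| suffices.\<close>

lemma diagonal_modulus_of_continuity:
  fixes f :: "complex ^ 'n::finite \<Rightarrow> complex"
  assumes cont: "continuous_on torus f"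
    and inv: "\<forall>x\<in>torus. \<forall>u::complex. norm u = 1 \<longrightarrow> f (\<chi> i. u * x $ i) = f x"
    and "e > 0"
  obtains K where "K \<ge> 0"
    and "\<And>x y. x \<in> torus \<Longrightarrow> y \<in> torus \<Longrightarrow>
           norm (f y - f x) \<le> e + K * diagonal_spread (\<chi> i. x $ i / y $ i)"
proof -
  obtain M where M: "\<And>x. x \<in> torus \<Longrightarrow> norm (f x) \<le> M"
    using compact_imp_bounded[OF compact_continuous_image[OF cont compact_torus]]
    unfolding bounded_iff by auto
  have "(\<chi> i. 1) \<in> (torus :: (complex ^ 'n) set)"
    by (simp add: torus_def)
  then have "M \<ge> 0"
    using M norm_ge_zero order_trans by blast
  obtain \<delta> where "\<delta> > 0"
    and \<delta>: "\<And>x y. x \<in> torus \<Longrightarrow> y \<in> torus \<Longrightarrow> dist y x < \<delta> \<Longrightarrow> dist (f y) (f x) < e"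
    using compact_uniformly_continuous[OF cont compact_torus] \<open>e > 0\<close>
    unfolding uniformly_continuous_on_def by metis
  define \<eta> where "\<eta> = (\<delta> / real CARD('n))\<^sup>2"
  have "\<eta> > 0"
    using \<open>\<delta> > 0\<close> by (simp add: \<eta>_def)
  define K where "K = 2 * M / \<eta>"
  have "K \<ge> 0"
    using \<open>M \<ge> 0\<close> \<open>\<eta> > 0\<close> by (simp add: K_def)
  have "norm (f y - f x) \<le> e + K * diagonal_spread (\<chi> i. x $ i / y $ i)"
    if x: "x \<in> torus" and y: "y \<in> torus" for x y
  proof (cases "diagonal_spread (\<chi> i. x $ i / y $ i) < \<eta>")
    case True
    then have "norm (f y - f x) < e"
      using norm_diff_less_if_diagonal_spread_less[OF inv \<open>\<delta> > 0\<close> \<delta> x y] by (simp add: \<eta>_def)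
    moreover have "K * diagonal_spread (\<chi> i. x $ i / y $ i) \<ge> 0"
      using \<open>K \<ge> 0\<close> diagonal_spread_nonneg by (rule mult_nonneg_nonneg)
    ultimately show ?thesis
      by linarith
  next
    case False
    have "norm (f y - f x) \<le> 2 * M"
      using M[OF x] M[OF y] norm_triangle_ineq4[of "f y" "f x"] by linarith
    also have "\<dots> \<le> K * diagonal_spread (\<chi> i. x $ i / y $ i)"
      using False \<open>\<eta> > 0\<close> \<open>M \<ge> 0\<close> by (simp add: K_def field_simps mult_left_mono)
    finally show ?thesis
      using \<open>e > 0\<close> by simp
  qed
  with \<open>K \<ge> 0\<close> show ?thesis
    using that by blast
qed

lemma torus_conv_sigma_ker:
  fixes x :: "complex ^ 'n::finite"
  assumes "x \<in> torus"
  shows "torus_conv f (sigma_ker n (real CARD('n) - 1)) x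
    = complex_of_real (1 / (2*pi) ^ CARD('n)) * integral angle_box
        (\<lambda>\<theta>. f (\<chi> i. cis (\<theta> $ i)) * complex_of_real (sq_kernel n (torus_div x \<theta>)))"
  unfolding torus_conv_def
  using sigma_ker_eq_sq_kernel[OF torus_div_in_torus[OF assms]] by (simp add: torus_div_def)

lemma const_diff_kernel_average:
  fixes F :: "'a::euclidean_space \<Rightarrow> complex" and k :: "'a \<Rightarrow> real"
  assumes F: "continuous_on (cbox a b) F"
    and k: "continuous_on (cbox a b) k" "integral (cbox a b) k = V"
    and "V \<noteq> 0"
  shows "c - complex_of_real (1 / V) * integral (cbox a b) (\<lambda>t. F t * complex_of_real (k t))
    = complex_of_real (1 / V) * integral (cbox a b) (\<lambda>t. (c - F t) * complex_of_real (k t))"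
proof -
  have "integral (cbox a b) (\<lambda>t. complex_of_real (k t)) = complex_of_real V"
    using k by (simp add: integral_complex_of_real integrable_continuous)
  moreover have "(\<lambda>t. c * complex_of_real (k t)) integrable_on cbox a b"
    and "(\<lambda>t. F t * complex_of_real (k t)) integrable_on cbox a b"
    by (intro integrable_continuous continuous_intros k F)+
  ultimately have "integral (cbox a b) (\<lambda>t. (c - F t) * complex_of_real (k t))
      = c * complex_of_real V - integral (cbox a b) (\<lambda>t. F t * complex_of_real (k t))"
    by (simp add: left_diff_distrib integral_diff)
  then show ?thesis
    using \<open>V \<noteq> 0\<close> by (simp add: field_simps)
qed

lemma norm_const_diff_kernel_average_le:
  fixes F :: "'a::euclidean_space \<Rightarrow> complex" and k s :: "'a \<Rightarrow> real"
  assumes F: "continuous_on (cbox a b) F"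
    and k: "continuous_on (cbox a b) k" "\<And>t. t \<in> cbox a b \<Longrightarrow> k t \<ge> 0"
      "integral (cbox a b) k = V" and "V > 0"
    and s: "continuous_on (cbox a b) s"
    and bound: "\<And>t. t \<in> cbox a b \<Longrightarrow> norm (F t - c) \<le> e + K * s t"
  shows "norm (c - complex_of_real (1 / V) * integral (cbox a b) (\<lambda>t. F t * complex_of_real (k t)))
    \<le> e + K / V * integral (cbox a b) (\<lambda>t. k t * s t)"
proof -
  have "norm (integral (cbox a b) (\<lambda>t. (c - F t) * complex_of_real (k t)))
      \<le> integral (cbox a b) (\<lambda>t. e * k t + K * (k t * s t))"
  proof (rule integral_norm_bound_integral)
    show "(\<lambda>t. (c - F t) * complex_of_real (k t)) integrable_on cbox a b"
      and "(\<lambda>t. e * k t + K * (k t * s t)) integrable_on cbox a b"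
      by (intro integrable_continuous continuous_intros k F s)+
    fix t
    assume t: "t \<in> cbox a b"
    have "norm ((c - F t) * complex_of_real (k t)) = norm (F t - c) * k t"
      using k(2)[OF t] by (simp add: norm_mult norm_minus_commute)
    also have "\<dots> \<le> (e + K * s t) * k t"
      using bound[OF t] k(2)[OF t] by (rule mult_right_mono)
    also have "\<dots> = e * k t + K * (k t * s t)"
      by (simp add: algebra_simps)
    finally show "norm ((c - F t) * complex_of_real (k t)) \<le> e * k t + K * (k t * s t)" .
  qed
  moreover have "integral (cbox a b) (\<lambda>t. e * k t + K * (k t * s t))
      = e * V + K * integral (cbox a b) (\<lambda>t. k t * s t)"
  proof -
    have "(\<lambda>t. e * k t) integrable_on cbox a b" "(\<lambda>t. K * (k t * s t)) integrable_on cbox a b"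
      by (intro integrable_continuous continuous_intros k s)+
    then show ?thesis
      using k(3) by (simp add: integral_add)
  qed
  ultimately have bound_integral: "norm (integral (cbox a b) (\<lambda>t. (c - F t) * complex_of_real (k t)))
      \<le> e * V + K * integral (cbox a b) (\<lambda>t. k t * s t)"
    by simp
  have "norm (c - complex_of_real (1 / V) * integral (cbox a b) (\<lambda>t. F t * complex_of_real (k t)))
      = norm (integral (cbox a b) (\<lambda>t. (c - F t) * complex_of_real (k t))) / V"
  proof -
    have "V \<noteq> 0"
      using \<open>V > 0\<close> by simp
    then show ?thesis
      unfolding const_diff_kernel_average[OF F k(1,3) \<open>V \<noteq> 0\<close>] norm_mult norm_of_real
      using \<open>V > 0\<close> by simp
  qed
  also have "\<dots> \<le> (e * V + K * integral (cbox a b) (\<lambda>t. k t * s t)) / V"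
    using bound_integral \<open>V > 0\<close> by (rule divide_right_mono[OF _ less_imp_le])
  also have "\<dots> = e + K / V * integral (cbox a b) (\<lambda>t. k t * s t)"
    using \<open>V > 0\<close> by (simp add: field_simps)
  finally show ?thesis .
qed

lemma torus_conv_sigma_ker_error:
  fixes f :: "complex ^ 'n::finite \<Rightarrow> complex"
  assumes cont: "continuous_on torus f"
    and inv: "\<forall>x\<in>torus. \<forall>u::complex. norm u = 1 \<longrightarrow> f (\<chi> i. u * x $ i) = f x"
    and "e > 0"
  obtains C where "\<And>n x. n \<ge> 1 \<Longrightarrow> x \<in> torus \<Longrightarrow>
      norm (f x - torus_conv f (sigma_ker n (real CARD('n) - 1)) x) \<le> e + C / real n"
proof -
  define N where "N = real CARD('n)"
  define V where "V = (2*pi) ^ CARD('n)"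
  obtain K where "K \<ge> 0" and K: "\<And>x y. x \<in> torus \<Longrightarrow> y \<in> torus \<Longrightarrow>
      norm (f y - f x) \<le> e + K * diagonal_spread (\<chi> i. x $ i / y $ i)"
    using diagonal_modulus_of_continuity[OF cont inv \<open>e > 0\<close>] by blast
  define C where "C = K * (2 * N * (N - 1)\<^sup>2)"
  have error: "norm (f x - torus_conv f (sigma_ker n (N - 1)) x) \<le> e + C / real n"
    if n: "n \<ge> 1" and x: "x \<in> torus" for n x
  proof -
    have "N \<ge> 1"
      using zero_less_card_finite[where 'a='n] by (simp add: N_def)
    have cont_F: "continuous_on angle_box (\<lambda>\<theta>. f (\<chi> i. cis (\<theta> $ i)))"
      by (rule continuous_on_compose2[OF cont]) (auto simp: torus_def intro!: continuous_intros)
    have "norm (f x - torus_conv f (sigma_ker n (N - 1)) x)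
        \<le> e + K / V * integral angle_box (\<lambda>\<theta>. sq_kernel n (torus_div x \<theta>) * diagonal_spread (torus_div x \<theta>))"
      unfolding torus_conv_sigma_ker[OF x] N_def V_def
    proof (rule norm_const_diff_kernel_average_le[OF cont_F])
      fix \<theta> :: "real ^ 'n"
      show "norm (f (\<chi> i. cis (\<theta> $ i)) - f x) \<le> e + K * diagonal_spread (torus_div x \<theta>)"
        using K[OF x, of "\<chi> i. cis (\<theta> $ i)"] by (simp add: torus_def torus_div_def)
    qed (use x in \<open>simp_all add: continuous_on_sq_kernel_torus_div sq_kernel_nonneg integral_sq_kernel
      continuous_on_diagonal_spread_torus_div\<close>)
    also have "\<dots> = e + K * (2 * N * (N - 1)\<^sup>2) / (real n + N - 1)"
      using integral_sq_kernel_diagonal_spread[OF x n] by (simp add: N_def V_def)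
    also have "\<dots> \<le> e + C / real n"
      using n \<open>N \<ge> 1\<close> \<open>K \<ge> 0\<close> by (simp add: C_def divide_left_mono)
    finally show ?thesis .
  qed
  show ?thesis
    by (rule that[of C]) (use error in \<open>simp add: N_def\<close>)
qed

lemma LIMSEQ_zero_if_eps_plus_const_over_n:
  fixes g :: "nat \<Rightarrow> real"
  assumes nonneg: "\<And>n. n \<ge> 1 \<Longrightarrow> 0 \<le> g n"
    and bound: "\<And>e. e > 0 \<Longrightarrow> \<exists>C. \<forall>n\<ge>1. g n \<le> e + C / real n"
  shows "g \<longlonglongrightarrow> 0"
proof (rule LIMSEQ_I)
  fix r :: real
  assume "r > 0"
  then obtain C where C: "\<And>n. n \<ge> 1 \<Longrightarrow> g n \<le> r / 2 + C / real n"
    using bound[of "r / 2"] by auto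
  have "\<forall>\<^sub>F n in sequentially. C / real n < r / 2"
    using order_tendstoD(2)[OF lim_const_over_n[of C], of "r / 2"] \<open>r > 0\<close> by simp
  then obtain M where M: "\<And>n. n \<ge> M \<Longrightarrow> C / real n < r / 2"
    unfolding eventually_sequentially by blast
  have "norm (g n - 0) < r" if "n \<ge> max 1 M" for n
  proof -
    have "0 \<le> g n" "g n \<le> r / 2 + C / real n" "C / real n < r / 2"
      using nonneg[of n] C[of n] M[of n] that by auto
    then show ?thesis
      by (simp only: real_norm_def diff_zero abs_of_nonneg)
  qed
  then show "\<exists>M. \<forall>n\<ge>M. norm (g n - 0) < r"
    by blast
qed

lemma SUP_LIMSEQ_zero_if_eps_plus_const_over_n:
  fixes h :: "nat \<Rightarrow> 'a \<Rightarrow> real"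
  assumes "x0 \<in> A"
    and nonneg: "\<And>n x. 0 \<le> h n x"
    and bound: "\<And>e. e > 0 \<Longrightarrow> \<exists>C. \<forall>n\<ge>1. \<forall>x\<in>A. h n x \<le> e + C / real n"
  shows "(\<lambda>n. SUP x\<in>A. h n x) \<longlonglongrightarrow> 0"
proof (rule LIMSEQ_zero_if_eps_plus_const_over_n)
  show "\<exists>C. \<forall>n\<ge>1. (SUP x\<in>A. h n x) \<le> e + C / real n" if "e > 0" for e
  proof -
    obtain C where C: "\<forall>n\<ge>1. \<forall>x\<in>A. h n x \<le> e + C / real n"
      using bound[OF \<open>e > 0\<close>] by blast
    have "(SUP x\<in>A. h n x) \<le> e + C / real n" if "n \<ge> 1" for n
      using C that \<open>x0 \<in> A\<close> by (intro cSUP_least) auto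
    then show ?thesis
      by blast
  qed
  show "0 \<le> (SUP x\<in>A. h n x)" if n: "n \<ge> 1" for n
  proof -
    obtain C where "\<forall>x\<in>A. h n x \<le> 1 + C / real n"
      using bound[of 1] n by auto
    then have "bdd_above (h n ` A)"
      by (intro bdd_aboveI2) blast
    then show ?thesis
      using \<open>x0 \<in> A\<close> by (rule cSUP_upper2) (rule nonneg)
  qed
qed

theorem proposition4p8:
  fixes f :: "complex ^ 'n::finite \<Rightarrow> complex"
  assumes "CARD('n) \<ge> 2"
    and "continuous_on torus f"
    and "\<forall>x\<in>torus. \<forall>u::complex. norm u = 1 \<longrightarrow> f (\<chi> i. u * x $ i) = f x"
  shows "(\<lambda>n. SUP x\<in>torus. norm (f x - torus_conv f (sigma_ker n (real CARD('n) - 1)) x))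
           \<longlonglongrightarrow> 0"
proof (rule SUP_LIMSEQ_zero_if_eps_plus_const_over_n)
  show "(\<chi> i. 1) \<in> (torus :: (complex ^ 'n) set)"
    by (simp add: torus_def)
  fix e :: real
  assume "e > 0"
  then obtain C where "\<And>n x. n \<ge> 1 \<Longrightarrow> x \<in> torus \<Longrightarrow>
      norm (f x - torus_conv f (sigma_ker n (real CARD('n) - 1)) x) \<le> e + C / real n"
    using torus_conv_sigma_ker_error[OF assms(2,3)] by blast
  then show "\<exists>C. \<forall>n\<ge>1. \<forall>x\<in>torus.
      norm (f x - torus_conv f (sigma_ker n (real CARD('n) - 1)) x) \<le> e + C / real n"
    by blast
qed simp

end
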